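(* Let $F$ be a field. Every almost identity PC-map $\varphi:\mathrm{UT}(3,F)\to\mathrm{UT}(3,F)$ is central, i.e. $\varphi(a)\in aC$ for every $a\in\mathrm{UT}(3,F)$, where $C=\{t_{13}(\alpha):\alpha\in F\}$; equivalently $\varphi(a)_{12}=a_{12}$ and $\varphi(a)_{23}=a_{23}$ for all $a$.
   Context: $\mathrm{UT}(3,F)$ is the group of upper unitriangular $3\times3$ matrices over $F$. $e$ is the identity, $e_{ij}$ the matrix unit, $t_{ij}(\alpha)=e+\alpha e_{ij}$ ($i<j$). $[x,y]=xyx^{-1}y^{-1}$. A PC-map is a bijection $\varphi$ of the group with $\varphi([x,y])=[\varphi(x),\varphi(y)]$ for all $x,y$; it is almost identity if $\varphi(t_{ij}(\alpha))=t_{ij}(\alpha)$ for all $i<j$, $\alpha\in F$. *)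

theory Defs
  imports Main
begin

text \<open>An upper unitriangular 3x3 matrix over a field is determined by its three
  entries above the diagonal.  ut a12 a13 a23 represents the matrix
  with rows (1, a12, a13), (0, 1, a23), (0, 0, 1).\<close>

datatype 'a ut3 = UT (e12: 'a) (e13: 'a) (e23: 'a)

definition ut_mult :: "'a::field ut3 \<Rightarrow> 'a ut3 \<Rightarrow> 'a ut3" where
  "ut_mult x y = UT (e12 x + e12 y) (e13 x + e13 y + e12 x * e23 y) (e23 x + e23 y)"

definition ut_one :: "'a::field ut3" where
  "ut_one = UT 0 0 0"

definition ut_inv :: "'a::field ut3 \<Rightarrow> 'a ut3" where
  "ut_inv x = UT (- e12 x) (e12 x * e23 x - e13 x) (- e23 x)"

definition ut_comm :: "'a::field ut3 \<Rightarrow> 'a ut3 \<Rightarrow> 'a ut3" where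
  "ut_comm x y = ut_mult (ut_mult (ut_mult x y) (ut_inv x)) (ut_inv y)"

definition t12 :: "'a::field \<Rightarrow> 'a ut3" where "t12 \<alpha> = UT \<alpha> 0 0"
definition t13 :: "'a::field \<Rightarrow> 'a ut3" where "t13 \<alpha> = UT 0 \<alpha> 0"
definition t23 :: "'a::field \<Rightarrow> 'a ut3" where "t23 \<alpha> = UT 0 0 \<alpha>"

definition PC_map :: "('a::field ut3 \<Rightarrow> 'a ut3) \<Rightarrow> bool" where
  "PC_map \<phi> \<longleftrightarrow> bij \<phi> \<and> (\<forall>x y. \<phi> (ut_comm x y) = ut_comm (\<phi> x) (\<phi> y))"

definition almost_identity :: "('a::field ut3 \<Rightarrow> 'a ut3) \<Rightarrow> bool" where
  "almost_identity \<phi> \<longleftrightarrow>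
     (\<forall>\<alpha>. \<phi> (t12 \<alpha>) = t12 \<alpha> \<and> \<phi> (t13 \<alpha>) = t13 \<alpha> \<and> \<phi> (t23 \<alpha>) = t23 \<alpha>)"

definition centre_ut :: "'a::field ut3 set" where
  "centre_ut = {t13 \<alpha> | \<alpha>. True}"

end

theory Submission
  imports Defs
begin

text \<open>Every commutator is central, with t13-entry the determinant
  e12 x * e23 y - e12 y * e23 x.  Hence [a, t23 1] = t13 (e12 a) and
  [a, t12 1] = t13 (- e23 a) record the two off-centre entries of a, and a map
  preserving commutators and fixing t12 1, t23 1 and the centre pointwise must
  preserve both.\<close>

lemma ut_comm_eq_t13: "ut_comm x y = t13 (e12 x * e23 y - e12 y * e23 x)"
  by (simp add: ut_comm_def ut_mult_def ut_inv_def t13_def algebra_simps)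

lemma ut_comm_t23_one: "ut_comm a (t23 1) = t13 (e12 a)"
  by (simp add: ut_comm_eq_t13 t23_def)

lemma ut_comm_t12_one: "ut_comm a (t12 1) = t13 (- e23 a)"
  by (simp add: ut_comm_eq_t13 t12_def)

lemma t13_eq_iff [simp]: "t13 \<alpha> = t13 \<beta> \<longleftrightarrow> \<alpha> = \<beta>"
  by (simp add: t13_def)

lemma mem_centre_coset_iff:
  "b \<in> ut_mult a ` centre_ut \<longleftrightarrow> e12 b = e12 a \<and> e23 b = e23 a"
proof
  assume "b \<in> ut_mult a ` centre_ut"
  then show "e12 b = e12 a \<and> e23 b = e23 a"
    by (auto simp: centre_ut_def ut_mult_def t13_def)
next
  assume "e12 b = e12 a \<and> e23 b = e23 a"
  then have "b = ut_mult a (t13 (e13 b - e13 a))"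
    by (cases b) (simp add: ut_mult_def t13_def)
  then show "b \<in> ut_mult a ` centre_ut"
    unfolding centre_ut_def by blast
qed

lemma comm_preserving_offcentre_entries:
  fixes \<phi> :: "'a::field ut3 \<Rightarrow> 'a ut3"
  assumes comm: "\<And>x y. \<phi> (ut_comm x y) = ut_comm (\<phi> x) (\<phi> y)"
    and fix12: "\<phi> (t12 1) = t12 1" and fix23: "\<phi> (t23 1) = t23 1"
    and fix13: "\<And>\<alpha>. \<phi> (t13 \<alpha>) = t13 \<alpha>"
  shows "e12 (\<phi> a) = e12 a" and "e23 (\<phi> a) = e23 a"
proof -
  have "t13 (e12 a) = ut_comm (\<phi> a) (t23 1)"
    using comm[of a "t23 1"] by (simp add: fix13 fix23 ut_comm_t23_one)
  then show "e12 (\<phi> a) = e12 a"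
    by (simp add: ut_comm_t23_one)
  have "t13 (- e23 a) = ut_comm (\<phi> a) (t12 1)"
    using comm[of a "t12 1"] by (simp add: fix13 fix12 ut_comm_t12_one)
  then show "e23 (\<phi> a) = e23 a"
    by (simp add: ut_comm_t12_one)
qed

theorem mainTheorem8:
  fixes \<phi> :: "'a::field ut3 \<Rightarrow> 'a ut3"
  assumes "PC_map \<phi>" and "almost_identity \<phi>"
  shows "\<forall>a. \<phi> a \<in> (\<lambda>c. ut_mult a c) ` centre_ut"
proof
  fix a :: "'a ut3"
  have comm: "\<And>x y. \<phi> (ut_comm x y) = ut_comm (\<phi> x) (\<phi> y)"
    using assms(1) by (simp add: PC_map_def)
  have "\<phi> (t12 1) = t12 1" "\<phi> (t23 1) = t23 1" "\<And>\<alpha>. \<phi> (t13 \<alpha>) = t13 \<alpha>"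
    using assms(2) by (simp_all add: almost_identity_def)
  with comm have "e12 (\<phi> a) = e12 a" and "e23 (\<phi> a) = e23 a"
    using comm_preserving_offcentre_entries by blast+
  then show "\<phi> a \<in> (\<lambda>c. ut_mult a c) ` centre_ut"
    by (simp add: mem_centre_coset_iff)
qed

end
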